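(* Let $G$ be a graph with $\theta(G)=3$ and $|V(G)|>4$. By the known structure theorem, $|V(G)|=2p$ for a prime $p\notin\{3,5\}$, and $V(G)$ is partitioned into the two degree classes $\mathcal{A}_1,\mathcal{A}_2$ with $|\mathcal{A}_1|=|\mathcal{A}_2|=p$. Then for each $i\in\{1,2\}$ and each $v\in\mathcal{A}_i$, the number of edges of $G$ joining $v$ to a vertex of $\mathcal{A}_{3-i}$ satisfies $$3\le |[v,\mathcal{A}_{3-i}]|\le p-3.$$
   Context: All graphs are finite and simple. A vertex coloring with $k$ colors is a surjective map $V(G)\to\{1,\dots,k\}$. It is distinguishing if only the identity automorphism preserves it. The distinguishing threshold $\theta(G)$ is the least $k$ such that every vertex coloring of $G$ using exactly $k$ colors is distinguishing. Equivalently, $\theta(G)=\max\{|\alpha| : \alpha\in\mathrm{Aut}(G)\setminus\{\mathrm{id}\}\}+1$, where $|\alpha|$ is the number of cycles (including fixed points) of $\alpha$ on $V(G)$. Known structure theorem (may be used): if $\theta(G)=3$ and $|V(G)|\neq 3$, then $|V(G)|=2p$ for a prime $p\ne 3,5$. Moreover, $G$ is a connected bi-regular graph whose two degree classes $\mathcal{A}_1=\{v_1,\dots,v_p\}$ and $\mathcal{A}_2=\{u_1,\dots,u_p\}$ induce non-isomorphic circulant graphs $G[\mathcal{A}_1]$ and $G[\mathcal{A}_2]$. $[v,\mathcal{A}]$ denotes the set of edges with one endpoint $v$ and the other endpoint in $\mathcal{A}$. *)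

theory Defs
  imports "HOL-Computational_Algebra.Primes"
begin

definition simple_graph :: "'a set \<Rightarrow> ('a \<Rightarrow> 'a \<Rightarrow> bool) \<Rightarrow> bool" where
  "simple_graph V E \<longleftrightarrow> finite V \<and> (\<forall>x y. E x y \<longrightarrow> x \<in> V \<and> y \<in> V)
     \<and> (\<forall>x y. E x y \<longrightarrow> E y x) \<and> (\<forall>x. \<not> E x x)"

definition degree :: "'a set \<Rightarrow> ('a \<Rightarrow> 'a \<Rightarrow> bool) \<Rightarrow> 'a \<Rightarrow> nat" where
  "degree V E v = card {u \<in> V. E v u}"

definition automorphism :: "'a set \<Rightarrow> ('a \<Rightarrow> 'a \<Rightarrow> bool) \<Rightarrow> ('a \<Rightarrow> 'a) \<Rightarrow> bool" where
  "automorphism V E \<sigma> \<longleftrightarrow> bij_betw \<sigma> V V \<and> (\<forall>x\<in>V. \<forall>y\<in>V. E (\<sigma> x) (\<sigma> y) \<longleftrightarrow> E x y)"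

definition distinguishing :: "'a set \<Rightarrow> ('a \<Rightarrow> 'a \<Rightarrow> bool) \<Rightarrow> ('a \<Rightarrow> nat) \<Rightarrow> bool" where
  "distinguishing V E c \<longleftrightarrow>
     (\<forall>\<sigma>. automorphism V E \<sigma> \<and> (\<forall>x\<in>V. c (\<sigma> x) = c x) \<longrightarrow> (\<forall>x\<in>V. \<sigma> x = x))"

definition dist_threshold :: "'a set \<Rightarrow> ('a \<Rightarrow> 'a \<Rightarrow> bool) \<Rightarrow> nat" where
  "dist_threshold V E = (LEAST k. k \<ge> 1 \<and>
     (\<forall>c :: 'a \<Rightarrow> nat. c ` V = {1..k} \<longrightarrow> distinguishing V E c))"

end

theory Submission
  imports Defs
begin

text \<open>Since \<open>\<theta>(G) = 3\<close> there is an automorphism \<open>\<sigma> \<noteq> id\<close>, while every colouring with three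
  colours is distinguishing. \<open>\<sigma>\<close> preserves degrees, hence both classes; if the \<open>\<sigma>\<close>-orbit of a
  vertex were smaller than its class, colouring that orbit, the rest of its class and the other
  class with three colours would be preserved by \<open>\<sigma>\<close>. So \<open>\<sigma>\<close> is a \<open>p\<close>-cycle on each class, and
  labelling both classes by \<open>\<int>/p\<close> along \<open>\<sigma>\<close> makes adjacency invariant under simultaneous
  translation. If \<open>v \<in> \<A>\<^sub>1\<close> had at most two or at least \<open>p - 2\<close> neighbours in \<open>\<A>\<^sub>2\<close>, that
  neighbourhood (or its complement) would be symmetric under a reflection \<open>s \<mapsto> c - s\<close>, and
  \<open>i \<mapsto> -i\<close> on \<open>\<A>\<^sub>1\<close> together with \<open>j \<mapsto> c - j\<close> on \<open>\<A>\<^sub>2\<close> would be a nontrivial automorphism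
  preserving the colouring \<open>{v}, \<A>\<^sub>1 - {v}, \<A>\<^sub>2\<close>.\<close>

definition every_coloring_distinguishing :: "'a set \<Rightarrow> ('a \<Rightarrow> 'a \<Rightarrow> bool) \<Rightarrow> nat \<Rightarrow> bool" where
  "every_coloring_distinguishing V E k \<longleftrightarrow>
     (\<forall>c :: 'a \<Rightarrow> nat. c ` V = {1..k} \<longrightarrow> distinguishing V E c)"

lemma dist_threshold_eq_Least:
  "dist_threshold V E = (LEAST k. 1 \<le> k \<and> every_coloring_distinguishing V E k)"
  unfolding dist_threshold_def every_coloring_distinguishing_def ..

lemma every_coloring_distinguishing_dist_threshold:
  assumes "finite V"
  shows "every_coloring_distinguishing V E (dist_threshold V E)"
proof -
  have "c ` V \<noteq> {1..card V + 1}" for c :: "'a \<Rightarrow> nat"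
  proof
    assume "c ` V = {1..card V + 1}"
    with card_image_le[OF \<open>finite V\<close>, of c] show False by simp
  qed
  then have "1 \<le> card V + 1 \<and> every_coloring_distinguishing V E (card V + 1)"
    unfolding every_coloring_distinguishing_def by simp
  then show ?thesis
    unfolding dist_threshold_eq_Least by (rule LeastI2) simp
qed

lemma dist_threshold_gt_1_nontrivial_automorphism:
  assumes "1 < dist_threshold V E"
  obtains \<sigma> where "automorphism V E \<sigma>" and "\<exists>x\<in>V. \<sigma> x \<noteq> x"
proof -
  have "\<not> (1 \<le> (1 :: nat) \<and> every_coloring_distinguishing V E 1)"
    using assms unfolding dist_threshold_eq_Least by (rule not_less_Least)
  then have "\<not> every_coloring_distinguishing V E 1" by simp
  then show ?thesis
    using that unfolding every_coloring_distinguishing_def distinguishing_def by blast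
qed

lemma automorphism_comp:
  assumes "automorphism V E \<sigma>" and "automorphism V E \<tau>"
  shows "automorphism V E (\<sigma> \<circ> \<tau>)"
  using assms bij_betw_trans[of \<tau> V V \<sigma> V] bij_betw_apply[of \<tau> V V]
  by (simp add: automorphism_def)

lemma automorphism_funpow:
  assumes "automorphism V E \<sigma>"
  shows "automorphism V E (\<sigma> ^^ n)"
proof (induction n)
  case 0
  show ?case by (simp add: automorphism_def bij_betw_id[unfolded id_def])
next
  case (Suc n)
  show ?case unfolding funpow.simps(2) by (rule automorphism_comp[OF assms Suc])
qed

lemma degree_automorphism:
  assumes "automorphism V E \<sigma>" and "x \<in> V"
  shows "degree V E (\<sigma> x) = degree V E x"
proof -
  have bij: "bij_betw \<sigma> V V" and adj: "\<And>x y. x \<in> V \<Longrightarrow> y \<in> V \<Longrightarrow> E (\<sigma> x) (\<sigma> y) \<longleftrightarrow> E x y"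
    using assms(1) by (auto simp: automorphism_def)
  have "{u \<in> V. E (\<sigma> x) u} = \<sigma> ` {w \<in> V. E x w}"
    using bij_betw_imp_surj_on[OF bij] bij_betw_apply[OF bij] adj assms(2) by fastforce
  moreover have "inj_on \<sigma> {w \<in> V. E x w}"
    using bij_betw_imp_inj_on[OF bij] by (rule inj_on_subset) auto
  ultimately show ?thesis unfolding degree_def by (simp add: card_image)
qed

lemma automorphism_preserves_degree_class:
  assumes "automorphism V E \<sigma>" and "x \<in> V" and "A1 \<union> A2 = V"
    and "\<forall>x\<in>A1. \<forall>y\<in>A2. degree V E x \<noteq> degree V E y"
  shows "\<sigma> x \<in> A1 \<longleftrightarrow> x \<in> A1"
proof -
  have "\<sigma> x \<in> V" using assms(1,2) by (auto simp: automorphism_def bij_betw_apply)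
  with assms degree_automorphism[OF assms(1,2)] show ?thesis by (metis Un_iff)
qed

lemma automorphism_preserving_nested_sets_trivial:
  assumes three: "every_coloring_distinguishing V E 3"
    and aut: "automorphism V E \<sigma>"
    and "B \<noteq> {}" and "B \<subset> C" and "C \<subset> V"
    and B_inv: "\<forall>x\<in>V. \<sigma> x \<in> B \<longleftrightarrow> x \<in> B" and C_inv: "\<forall>x\<in>V. \<sigma> x \<in> C \<longleftrightarrow> x \<in> C"
  shows "\<forall>x\<in>V. \<sigma> x = x"
proof -
  define c :: "'a \<Rightarrow> nat" where "c x = (if x \<in> B then 1 else if x \<in> C then 2 else 3)" for x
  have "c ` V = {1..3}"
  proof
    show "c ` V \<subseteq> {1..3}" unfolding c_def by auto
    obtain b1 b2 b3 where "b1 \<in> B" "b2 \<in> C - B" "b3 \<in> V - C" and "b3 \<notin> B"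
      using assms(3-5) by blast
    then have "c b1 = 1" "c b2 = 2" "c b3 = 3" unfolding c_def by auto
    moreover have "{b1, b2, b3} \<subseteq> V" using \<open>b1 \<in> B\<close> \<open>b2 \<in> C - B\<close> \<open>b3 \<in> V - C\<close> assms(4,5) by blast
    moreover have "{1..3 :: nat} = {1, 2, 3}" by (auto simp: numeral_eq_Suc le_Suc_eq)
    ultimately show "{1..3} \<subseteq> c ` V" by (simp add: image_iff) metis
  qed
  moreover have "\<forall>x\<in>V. c (\<sigma> x) = c x"
    using B_inv C_inv unfolding c_def by auto
  ultimately show ?thesis
    using three aut unfolding every_coloring_distinguishing_def distinguishing_def by blast
qed

lemma funpow_returns:
  assumes bij: "bij_betw \<sigma> V V" and "finite V" and "a \<in> V"
  shows "\<exists>m > 0. (\<sigma> ^^ m) a = a"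
proof -
  have orbit_in_V: "(\<sigma> ^^ k) a \<in> V" for k
    using bij_betw_apply[OF bij_betw_funpow[OF bij] \<open>a \<in> V\<close>] .
  have "\<not> inj_on (\<lambda>k. (\<sigma> ^^ k) a) {..card V}"
  proof
    assume "inj_on (\<lambda>k. (\<sigma> ^^ k) a) {..card V}"
    then have "card ((\<lambda>k. (\<sigma> ^^ k) a) ` {..card V}) = card V + 1"
      by (simp add: card_image)
    moreover have "(\<lambda>k. (\<sigma> ^^ k) a) ` {..card V} \<subseteq> V" using orbit_in_V by auto
    ultimately show False using card_mono[OF \<open>finite V\<close>] by (metis add_le_same_cancel1 not_one_le_zero)
  qed
  then obtain i j where "i < j" "(\<sigma> ^^ i) a = (\<sigma> ^^ j) a"
    unfolding inj_on_def by (metis linorder_neqE_nat)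
  moreover have "(\<sigma> ^^ i) ((\<sigma> ^^ (j - i)) a) = (\<sigma> ^^ (i + (j - i))) a"
    by (simp add: funpow_add)
  ultimately have "(\<sigma> ^^ i) ((\<sigma> ^^ (j - i)) a) = (\<sigma> ^^ i) a"
    by simp
  then have "(\<sigma> ^^ (j - i)) a = a"
    using bij_betw_imp_inj_on[OF bij_betw_funpow[OF bij]] orbit_in_V \<open>a \<in> V\<close>
    by (meson inj_onD)
  with \<open>i < j\<close> show ?thesis by (intro exI[of _ "j - i"]) auto
qed

lemma funpow_orbit_period:
  assumes "bij_betw \<sigma> V V" and "finite V" and "a \<in> V"
  defines "n \<equiv> card (range (\<lambda>k. (\<sigma> ^^ k) a))"
  shows "0 < n" and "(\<sigma> ^^ n) a = a" and "inj_on (\<lambda>k. (\<sigma> ^^ k) a) {0..<n}"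
proof -
  define m where "m = (LEAST m. 0 < m \<and> (\<sigma> ^^ m) a = a)"
  have m: "0 < m" "(\<sigma> ^^ m) a = a"
    using LeastI_ex[OF funpow_returns[OF assms(1-3)]] unfolding m_def by auto
  have inj: "inj_on (\<lambda>k. (\<sigma> ^^ k) a) {0..<m}"
    by (rule inj_on_funpow_least) (use m not_less_Least in \<open>auto simp: m_def\<close>)
  have "range (\<lambda>k. (\<sigma> ^^ k) a) = (\<lambda>k. (\<sigma> ^^ k) a) ` {0..<m}"
    using m by (auto simp: funpow_mod_eq intro!: image_eqI[where x = "k mod m" for k])
  then have "n = m" unfolding n_def using card_image[OF inj] by simp
  with m inj show "0 < n" "(\<sigma> ^^ n) a = a" "inj_on (\<lambda>k. (\<sigma> ^^ k) a) {0..<n}" by auto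
qed

lemma funpow_orbit_eq_invariant_set:
  assumes three: "every_coloring_distinguishing V E 3"
    and aut: "automorphism V E \<sigma>" and nontrivial: "\<exists>x\<in>V. \<sigma> x \<noteq> x"
    and "finite V" and "A \<subset> V" and A_inv: "\<forall>x\<in>V. \<sigma> x \<in> A \<longleftrightarrow> x \<in> A" and "a \<in> A"
  shows "range (\<lambda>k. (\<sigma> ^^ k) a) = A"
proof (rule ccontr)
  define Orb where "Orb = range (\<lambda>k. (\<sigma> ^^ k) a)"
  have bij: "bij_betw \<sigma> V V" using aut by (simp add: automorphism_def)
  have "a \<in> V" using \<open>a \<in> A\<close> \<open>A \<subset> V\<close> by blast
  have "(\<sigma> ^^ k) a \<in> A" for k
  proof (induction k)
    case (Suc k)
    with \<open>A \<subset> V\<close> A_inv show ?case by auto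
  qed (use \<open>a \<in> A\<close> in simp)
  then have "Orb \<subseteq> A" unfolding Orb_def by auto
  moreover assume "range (\<lambda>k. (\<sigma> ^^ k) a) \<noteq> A"
  ultimately have "Orb \<subset> A" unfolding Orb_def by blast
  obtain m where "0 < m" "(\<sigma> ^^ m) a = a"
    using funpow_returns[OF bij \<open>finite V\<close> \<open>a \<in> V\<close>] by blast
  have "\<sigma> x \<in> Orb \<longleftrightarrow> x \<in> Orb" if "x \<in> V" for x
  proof
    assume "\<sigma> x \<in> Orb"
    then obtain k where "\<sigma> x = (\<sigma> ^^ k) a" unfolding Orb_def by auto
    also have "\<dots> = (\<sigma> ^^ (k + m)) a" using \<open>(\<sigma> ^^ m) a = a\<close> by (simp add: funpow_add)
    also have "\<dots> = \<sigma> ((\<sigma> ^^ (k + m - 1)) a)"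
      using \<open>0 < m\<close> by (metis Suc_diff_1 add_gr_0 comp_apply funpow.simps(2))
    finally have "x = (\<sigma> ^^ (k + m - 1)) a"
      using bij_betw_imp_inj_on[OF bij] that bij_betw_apply[OF bij_betw_funpow[OF bij] \<open>a \<in> V\<close>]
      by (meson inj_onD)
    then show "x \<in> Orb" unfolding Orb_def by auto
  next
    assume "x \<in> Orb"
    then obtain k where "x = (\<sigma> ^^ k) a" unfolding Orb_def by auto
    then have "\<sigma> x = (\<sigma> ^^ Suc k) a" by simp
    then show "\<sigma> x \<in> Orb" unfolding Orb_def by (rule range_eqI)
  qed
  moreover have "Orb \<noteq> {}" unfolding Orb_def by simp
  ultimately have "\<forall>x\<in>V. \<sigma> x = x"
    using automorphism_preserving_nested_sets_trivial[OF three aut _ \<open>Orb \<subset> A\<close> \<open>A \<subset> V\<close>] A_inv by blast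
  with nontrivial show False by blast
qed

lemma cyclic_labelling:
  assumes "0 < p" and period: "(\<sigma> ^^ p) a = a" and inj: "inj_on (\<lambda>k. (\<sigma> ^^ k) a) {0..<p}"
  obtains X :: "int \<Rightarrow> 'a"
  where "X 0 = a" and "range X = range (\<lambda>k. (\<sigma> ^^ k) a)"
    and "\<And>i j. X i = X j \<longleftrightarrow> i mod int p = j mod int p"
    and "\<And>i n. X (i + int n) = (\<sigma> ^^ n) (X i)"
proof
  define X where "X i = (\<sigma> ^^ nat (i mod int p)) a" for i
  show step: "X (i + int n) = (\<sigma> ^^ n) (X i)" for i n
  proof -
    have "(\<sigma> ^^ n) (X i) = (\<sigma> ^^ (n + nat (i mod int p))) a"
      unfolding X_def by (simp add: funpow_add)
    also have "\<dots> = (\<sigma> ^^ ((n + nat (i mod int p)) mod p)) a"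
      using period by (simp add: funpow_mod_eq)
    also have "(n + nat (i mod int p)) mod p = nat ((i + int n) mod int p)"
    proof -
      have "int ((n + nat (i mod int p)) mod p) = (int n + i mod int p) mod int p"
        using \<open>0 < p\<close> by (simp add: zmod_int)
      also have "\<dots> = (i + int n) mod int p" by (simp add: mod_add_right_eq add.commute)
      finally show ?thesis by simp
    qed
    finally show ?thesis unfolding X_def ..
  qed
  show "X 0 = a" unfolding X_def by simp
  then show "range X = range (\<lambda>k. (\<sigma> ^^ k) a)"
    using step[of 0] by (auto simp: X_def intro: range_eqI[where x = "int k" for k])
  show "X i = X j \<longleftrightarrow> i mod int p = j mod int p" for i j
  proof
    assume "X i = X j"
    moreover have "nat (i mod int p) \<in> {0..<p}" "nat (j mod int p) \<in> {0..<p}"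
      using \<open>0 < p\<close> by (auto simp: nat_less_iff)
    ultimately have "nat (i mod int p) = nat (j mod int p)"
      using inj unfolding X_def inj_on_def by blast
    then show "i mod int p = j mod int p" using \<open>0 < p\<close> by (simp add: nat_eq_iff)
  qed (simp add: X_def)
qed

lemma shift_invariant_adjacency:
  assumes aut: "automorphism V E \<sigma>" and "0 < p"
    and "range X \<subseteq> V" and "range Y \<subseteq> V"
    and X_mod: "\<And>i. X i = X (i mod int p)" and Y_mod: "\<And>i. Y i = Y (i mod int p)"
    and X_step: "\<And>i n. X (i + int n) = (\<sigma> ^^ n) (X i)"
    and Y_step: "\<And>i n. Y (i + int n) = (\<sigma> ^^ n) (Y i)"
  shows "E (X (i + k)) (Y (j + k)) \<longleftrightarrow> E (X i) (Y j)"
proof -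
  define n where "n = nat (k mod int p)"
  have "(i + k) mod int p = (i + int n) mod int p" "(j + k) mod int p = (j + int n) mod int p"
    using \<open>0 < p\<close> unfolding n_def by (simp_all add: mod_add_right_eq)
  then have "X (i + k) = (\<sigma> ^^ n) (X i)" "Y (j + k) = (\<sigma> ^^ n) (Y j)"
    using X_mod Y_mod X_step Y_step by metis+
  moreover have "X i \<in> V" "Y j \<in> V" using assms(3,4) by auto
  ultimately show ?thesis
    using automorphism_funpow[OF aut, of n] by (simp add: automorphism_def)
qed

lemma reflected_residue_eq_iff:
  fixes p t u s :: int
  assumes "t \<in> {0..<p}" and "u \<in> {0..<p}"
  shows "(t + u - s) mod p = t \<longleftrightarrow> s mod p = u"
proof -
  have "(t + u - s) mod p = t \<longleftrightarrow> (t + u - s) mod p = t mod p" using assms by simp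
  also have "\<dots> \<longleftrightarrow> p dvd (u - s)" by (simp add: mod_eq_dvd_iff algebra_simps)
  also have "\<dots> \<longleftrightarrow> u mod p = s mod p" by (simp add: mod_eq_dvd_iff)
  finally show ?thesis using assms by auto
qed

lemma reflection_of_small_residue_set:
  fixes D :: "int set" and p :: int
  assumes "D \<subseteq> {0..<p}" and "card D \<le> 2"
  obtains c where "\<And>s. (c - s) mod p \<in> D \<longleftrightarrow> s mod p \<in> D"
proof -
  have "finite D" using assms(1) finite_subset by blast
  have "card D = 0 \<or> card D = 1 \<or> card D = 2" using assms(2) by linarith
  then have "D = {} \<or> (\<exists>t u. D = {t, u})"
  proof (elim disjE)
    assume "card D = 1"
    then obtain t where "D = {t}" by (rule card_1_singletonE)
    then show ?thesis by blast
  qed (use \<open>finite D\<close> in \<open>auto simp: card_2_iff\<close>)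
  then show ?thesis
  proof
    assume "D = {}"
    then show ?thesis using that by blast
  next
    assume "\<exists>t u. D = {t, u}"
    then obtain t u where D: "D = {t, u}" by blast
    then have "t \<in> {0..<p}" "u \<in> {0..<p}" using assms(1) by auto
    then have "(t + u - s) mod p \<in> D \<longleftrightarrow> s mod p \<in> D" for s
      using reflected_residue_eq_iff[of t p u s] reflected_residue_eq_iff[of u p t s]
      unfolding D by (auto simp: add.commute)
    then show ?thesis using that by blast
  qed
qed

lemma reflection_of_residue_set:
  fixes F :: "int set" and p :: nat
  assumes "0 < p" and "F \<subseteq> {0..<int p}" and "card F \<le> 2 \<or> p \<le> card F + 2"
  obtains c where "\<And>s. (c - s) mod int p \<in> F \<longleftrightarrow> s mod int p \<in> F"
  using assms(3)
proof
  assume "card F \<le> 2"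
  then show ?thesis using reflection_of_small_residue_set[OF assms(2)] that by blast
next
  assume "p \<le> card F + 2"
  define D where "D = {0..<int p} - F"
  have "card D = p - card F"
    unfolding D_def using assms(2) by (simp add: card_Diff_subset finite_subset)
  then have "card D \<le> 2" using \<open>p \<le> card F + 2\<close> by linarith
  then obtain c where "\<And>s. (c - s) mod int p \<in> D \<longleftrightarrow> s mod int p \<in> D"
    using reflection_of_small_residue_set[of D "int p"] unfolding D_def by blast
  moreover have "r mod int p \<in> {0..<int p}" for r using assms(1) by simp
  ultimately have "(c - s) mod int p \<in> F \<longleftrightarrow> s mod int p \<in> F" for s
    unfolding D_def by (metis Diff_iff)
  then show ?thesis using that by blast
qed

lemma reflection_preserves_adjacency:
  fixes X Y :: "int \<Rightarrow> 'a" and c :: int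
  assumes sym: "\<And>x y. E x y \<Longrightarrow> E y x"
    and XX: "\<And>i j k. E (X (i + k)) (X (j + k)) \<longleftrightarrow> E (X i) (X j)"
    and XY: "\<And>i j k. E (X (i + k)) (Y (j + k)) \<longleftrightarrow> E (X i) (Y j)"
    and YY: "\<And>i j k. E (Y (i + k)) (Y (j + k)) \<longleftrightarrow> E (Y i) (Y j)"
    and reflect: "\<And>s. E (X 0) (Y (c - s)) \<longleftrightarrow> E (X 0) (Y s)"
  shows "E (X (- i)) (X (- j)) \<longleftrightarrow> E (X i) (X j)"
    and "E (X (- i)) (Y (c - j)) \<longleftrightarrow> E (X i) (Y j)"
    and "E (Y (c - j)) (X (- i)) \<longleftrightarrow> E (Y j) (X i)"
    and "E (Y (c - i)) (Y (c - j)) \<longleftrightarrow> E (Y i) (Y j)"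
proof -
  show "E (X (- i)) (X (- j)) \<longleftrightarrow> E (X i) (X j)"
    using XX[of "- i" "i + j" "- j"] sym by auto
  show "E (Y (c - i)) (Y (c - j)) \<longleftrightarrow> E (Y i) (Y j)"
    using YY[of "c - i" "i + j - c" "c - j"] sym by auto
  have "E (X (- i)) (Y (c - j)) \<longleftrightarrow> E (X 0) (Y (c - (j - i)))"
    using XY[of "- i" i "c - j"] by (simp add: algebra_simps)
  also have "\<dots> \<longleftrightarrow> E (X 0) (Y (j - i))" by (rule reflect)
  also have "\<dots> \<longleftrightarrow> E (X i) (Y j)" using XY[of 0 i "j - i"] by simp
  finally show "E (X (- i)) (Y (c - j)) \<longleftrightarrow> E (X i) (Y j)" .
  then show "E (Y (c - j)) (X (- i)) \<longleftrightarrow> E (Y j) (X i)"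
    using sym by blast
qed

lemma reflection_automorphism:
  fixes X Y :: "int \<Rightarrow> 'a" and p c :: int
  assumes sym: "\<And>x y. E x y \<Longrightarrow> E y x"
    and V: "V = range X \<union> range Y" and disjoint: "range X \<inter> range Y = {}"
    and X_eq: "\<And>i j. X i = X j \<longleftrightarrow> i mod p = j mod p"
    and Y_eq: "\<And>i j. Y i = Y j \<longleftrightarrow> i mod p = j mod p"
    and XX: "\<And>i j k. E (X (i + k)) (X (j + k)) \<longleftrightarrow> E (X i) (X j)"
    and XY: "\<And>i j k. E (X (i + k)) (Y (j + k)) \<longleftrightarrow> E (X i) (Y j)"
    and YY: "\<And>i j k. E (Y (i + k)) (Y (j + k)) \<longleftrightarrow> E (Y i) (Y j)"
    and reflect: "\<And>s. E (X 0) (Y (c - s)) \<longleftrightarrow> E (X 0) (Y s)"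
  obtains \<tau> where "automorphism V E \<tau>" and "\<And>i. \<tau> (X i) = X (- i)"
    and "\<forall>x\<in>V. \<tau> x = X 0 \<longleftrightarrow> x = X 0" and "\<forall>x\<in>V. \<tau> x \<in> range X \<longleftrightarrow> x \<in> range X"
proof
  define \<tau> where "\<tau> x = (if x \<in> range X then X (- inv X x) else Y (c - inv Y x))" for x
  show \<tau>_X: "\<tau> (X i) = X (- i)" for i
  proof -
    have "inv X (X i) mod p = i mod p" using X_eq f_inv_into_f[of "X i" X UNIV] by blast
    then have "X (- inv X (X i)) = X (- i)" using X_eq mod_minus_cong by blast
    then show ?thesis unfolding \<tau>_def by simp
  qed
  have \<tau>_Y: "\<tau> (Y j) = Y (c - j)" for j
  proof -
    have "inv Y (Y j) mod p = j mod p" using Y_eq f_inv_into_f[of "Y j" Y UNIV] by blast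
    then have "Y (c - inv Y (Y j)) = Y (c - j)" using Y_eq mod_diff_cong by blast
    moreover have "Y j \<notin> range X" using disjoint by blast
    ultimately show ?thesis unfolding \<tau>_def by simp
  qed
  have V_cases: "(\<exists>i. x = X i) \<or> (\<exists>j. x = Y j)" if "x \<in> V" for x
    using that V by blast
  have "\<tau> (\<tau> x) = x" if "x \<in> V" for x
    using V_cases[OF that] \<tau>_X \<tau>_Y by auto
  moreover have "\<tau> x \<in> V" if "x \<in> V" for x
    using V_cases[OF that] \<tau>_X \<tau>_Y V by auto
  ultimately have "bij_betw \<tau> V V"
    by (intro bij_betw_byWitness[where f' = \<tau>]) auto
  moreover have "E (\<tau> x) (\<tau> y) \<longleftrightarrow> E x y" if "x \<in> V" "y \<in> V" for x y
    using V_cases[OF that(1)] V_cases[OF that(2)]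
    by (elim disjE exE)
      (simp_all add: \<tau>_X \<tau>_Y
        reflection_preserves_adjacency[where E = E and X = X and Y = Y, OF sym XX XY YY reflect])
  ultimately show "automorphism V E \<tau>" unfolding automorphism_def by blast
  have X_neg: "X (- i) = X 0 \<longleftrightarrow> X i = X 0" for i
    using X_eq[of "- i" 0] X_eq[of i 0] by (simp add: mod_eq_0_iff_dvd)
  have Y_notin: "Y j \<notin> range X" for j using disjoint by blast
  then have Y_ne_X: "Y j \<noteq> X i" for i j by blast
  have "(\<tau> x = X 0 \<longleftrightarrow> x = X 0) \<and> (\<tau> x \<in> range X \<longleftrightarrow> x \<in> range X)" if "x \<in> V" for x
    using V_cases[OF that]
  proof (elim disjE exE)
    fix i assume "x = X i"
    then show ?thesis using \<tau>_X X_neg by auto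
  next
    fix j assume "x = Y j"
    then show ?thesis by (simp add: \<tau>_Y Y_notin Y_ne_X)
  qed
  then show "\<forall>x\<in>V. \<tau> x = X 0 \<longleftrightarrow> x = X 0" "\<forall>x\<in>V. \<tau> x \<in> range X \<longleftrightarrow> x \<in> range X"
    by blast+
qed

lemma invariant_set_cyclic_labelling:
  assumes three: "every_coloring_distinguishing V E 3"
    and aut: "automorphism V E \<sigma>" and nontrivial: "\<exists>x\<in>V. \<sigma> x \<noteq> x"
    and "finite V" and "A \<subset> V" and "\<forall>x\<in>V. \<sigma> x \<in> A \<longleftrightarrow> x \<in> A" and "card A = p" and "a \<in> A"
  obtains Z :: "int \<Rightarrow> 'a"
  where "Z 0 = a" and "range Z = A"
    and "\<And>i j. Z i = Z j \<longleftrightarrow> i mod int p = j mod int p"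
    and "\<And>i n. Z (i + int n) = (\<sigma> ^^ n) (Z i)"
proof -
  have orbit: "range (\<lambda>k. (\<sigma> ^^ k) a) = A"
    by (rule funpow_orbit_eq_invariant_set[OF three aut nontrivial assms(4-6,8)])
  have bij: "bij_betw \<sigma> V V" using aut by (simp add: automorphism_def)
  have "a \<in> V" using assms(5,8) by blast
  note period = funpow_orbit_period[OF bij \<open>finite V\<close> this, unfolded orbit \<open>card A = p\<close>]
  obtain Z where Z: "Z 0 = a" "range Z = range (\<lambda>k. (\<sigma> ^^ k) a)"
    "\<And>i j. Z i = Z j \<longleftrightarrow> i mod int p = j mod int p" "\<And>i n. Z (i + int n) = (\<sigma> ^^ n) (Z i)"
    using cyclic_labelling[OF period] by blast
  show ?thesis by (rule that[OF Z(1) _ Z(3,4)]) (simp add: Z(2) orbit)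
qed

lemma dist_threshold_3_rotation_labelling:
  assumes G: "simple_graph V E" and theta: "dist_threshold V E = 3" and "0 < p"
    and part: "A1 \<union> A2 = V" "A1 \<inter> A2 = {}" "card A1 = p" "card A2 = p"
    and classes: "\<forall>x\<in>A1. \<forall>y\<in>A2. degree V E x \<noteq> degree V E y"
    and "v \<in> A1"
  obtains X Y :: "int \<Rightarrow> 'a"
  where "X 0 = v" and "range X = A1" and "range Y = A2"
    and "\<And>i j. X i = X j \<longleftrightarrow> i mod int p = j mod int p"
    and "\<And>i j. Y i = Y j \<longleftrightarrow> i mod int p = j mod int p"
    and "\<And>i j k. E (X (i + k)) (X (j + k)) \<longleftrightarrow> E (X i) (X j)"
    and "\<And>i j k. E (X (i + k)) (Y (j + k)) \<longleftrightarrow> E (X i) (Y j)"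
    and "\<And>i j k. E (Y (i + k)) (Y (j + k)) \<longleftrightarrow> E (Y i) (Y j)"
proof -
  have "finite V" using G by (simp add: simple_graph_def)
  note three = every_coloring_distinguishing_dist_threshold[OF this, of E, unfolded theta]
  obtain \<sigma> where aut: "automorphism V E \<sigma>" and nontrivial: "\<exists>x\<in>V. \<sigma> x \<noteq> x"
    using dist_threshold_gt_1_nontrivial_automorphism[of V E] theta by auto
  have "A1 \<noteq> {}" "A2 \<noteq> {}" using part(3,4) \<open>0 < p\<close> by auto
  then have "A1 \<subset> V" "A2 \<subset> V" using part(1,2) by blast+
  have "A2 \<union> A1 = V" using part(1) by blast
  moreover have "\<forall>x\<in>A2. \<forall>y\<in>A1. degree V E x \<noteq> degree V E y" using classes by metis
  ultimately have A_inv: "\<forall>x\<in>V. \<sigma> x \<in> A1 \<longleftrightarrow> x \<in> A1" "\<forall>x\<in>V. \<sigma> x \<in> A2 \<longleftrightarrow> x \<in> A2"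
    using automorphism_preserves_degree_class[OF aut _ part(1) classes]
      automorphism_preserves_degree_class[OF aut] by blast+
  note labelling = invariant_set_cyclic_labelling[OF three aut nontrivial \<open>finite V\<close>]
  obtain b where "b \<in> A2" using \<open>A2 \<noteq> {}\<close> by blast
  obtain X where X: "X 0 = v" "range X = A1" "\<And>i j. X i = X j \<longleftrightarrow> i mod int p = j mod int p"
      "\<And>i n. X (i + int n) = (\<sigma> ^^ n) (X i)"
    using labelling[OF \<open>A1 \<subset> V\<close> A_inv(1) part(3) \<open>v \<in> A1\<close>] by blast
  obtain Y where Y: "range Y = A2" "\<And>i j. Y i = Y j \<longleftrightarrow> i mod int p = j mod int p"
      "\<And>i n. Y (i + int n) = (\<sigma> ^^ n) (Y i)"
    using labelling[OF \<open>A2 \<subset> V\<close> A_inv(2) part(4) \<open>b \<in> A2\<close>] by blast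
  have XV: "range X \<subseteq> V" and YV: "range Y \<subseteq> V" using X(2) Y(1) part(1) by auto
  have X_mod: "X i = X (i mod int p)" and Y_mod: "Y i = Y (i mod int p)" for i
    using X(3) Y(2) by simp_all
  note shift = shift_invariant_adjacency[OF aut \<open>0 < p\<close>]
  show ?thesis
    by (rule that[OF X(1,2) Y(1) X(3) Y(2)])
      (rule shift[OF XV XV X_mod X_mod X(4) X(4)] shift[OF XV YV X_mod Y_mod X(4) Y(3)]
        shift[OF YV YV Y_mod Y_mod Y(3) Y(3)])+
qed

lemma extreme_neighbourhood_reflection:
  fixes Y :: "int \<Rightarrow> 'a" and p :: nat
  assumes "0 < p" and "range Y = A" and Y_eq: "\<And>i j. Y i = Y j \<longleftrightarrow> i mod int p = j mod int p"
    and extreme: "card {u \<in> A. E v u} \<le> 2 \<or> p \<le> card {u \<in> A. E v u} + 2"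
  obtains c where "\<And>s. E v (Y (c - s)) \<longleftrightarrow> E v (Y s)"
proof -
  define F where "F = {t \<in> {0..<int p}. E v (Y t)}"
  have Y_mod: "Y i = Y (i mod int p)" for i using Y_eq by simp
  have "{u \<in> A. E v u} = Y ` F"
  proof
    show "{u \<in> A. E v u} \<subseteq> Y ` F"
    proof
      fix u assume "u \<in> {u \<in> A. E v u}"
      then obtain i where "u = Y (i mod int p)" "E v u" using \<open>range Y = A\<close> Y_mod by auto
      moreover have "i mod int p \<in> {0..<int p}" using \<open>0 < p\<close> by simp
      ultimately show "u \<in> Y ` F" unfolding F_def by blast
    qed
  qed (use \<open>range Y = A\<close> in \<open>auto simp: F_def\<close>)
  moreover have "inj_on Y F" by (rule inj_onI) (auto simp: F_def Y_eq)
  ultimately have "card F = card {u \<in> A. E v u}" by (simp add: card_image)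
  moreover have "F \<subseteq> {0..<int p}" unfolding F_def by blast
  ultimately obtain c where c: "\<And>s. (c - s) mod int p \<in> F \<longleftrightarrow> s mod int p \<in> F"
    using reflection_of_residue_set[OF \<open>0 < p\<close>] extreme by metis
  have "E v (Y s) \<longleftrightarrow> s mod int p \<in> F" for s
    using Y_mod[of s] \<open>0 < p\<close> unfolding F_def by simp
  with c show ?thesis using that by blast
qed

lemma cross_neighbourhood_bounds:
  assumes G: "simple_graph V E" and theta: "dist_threshold V E = 3" and "3 \<le> p"
    and part: "A1 \<union> A2 = V" "A1 \<inter> A2 = {}" "card A1 = p" "card A2 = p"
    and classes: "\<forall>x\<in>A1. \<forall>y\<in>A2. degree V E x \<noteq> degree V E y"
    and "v \<in> A1"
  shows "3 \<le> card {u \<in> A2. E v u} \<and> card {u \<in> A2. E v u} \<le> p - 3"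
proof (rule ccontr)
  assume "\<not> ?thesis"
  then have extreme: "card {u \<in> A2. E v u} \<le> 2 \<or> p \<le> card {u \<in> A2. E v u} + 2" by linarith
  have "0 < p" using \<open>3 \<le> p\<close> by simp
  have "finite V" and sym: "\<And>x y. E x y \<Longrightarrow> E y x" using G by (auto simp: simple_graph_def)
  obtain X Y :: "int \<Rightarrow> 'a"
    where X: "X 0 = v" "range X = A1" and Y: "range Y = A2"
      and X_eq: "\<And>i j. X i = X j \<longleftrightarrow> i mod int p = j mod int p"
      and Y_eq: "\<And>i j. Y i = Y j \<longleftrightarrow> i mod int p = j mod int p"
      and XX: "\<And>i j k. E (X (i + k)) (X (j + k)) \<longleftrightarrow> E (X i) (X j)"
      and XY: "\<And>i j k. E (X (i + k)) (Y (j + k)) \<longleftrightarrow> E (X i) (Y j)"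
      and YY: "\<And>i j k. E (Y (i + k)) (Y (j + k)) \<longleftrightarrow> E (Y i) (Y j)"
    using dist_threshold_3_rotation_labelling[OF G theta \<open>0 < p\<close> part classes \<open>v \<in> A1\<close>] by blast
  obtain c where "\<And>s. E (X 0) (Y (c - s)) \<longleftrightarrow> E (X 0) (Y s)"
    using extreme_neighbourhood_reflection[of p Y A2 E v, OF \<open>0 < p\<close> Y Y_eq extreme] X(1) by metis
  moreover have "V = range X \<union> range Y" "range X \<inter> range Y = {}" using X Y part by auto
  ultimately obtain \<tau> where aut: "automorphism V E \<tau>" and \<tau>_X: "\<And>i. \<tau> (X i) = X (- i)"
    and fixes_v: "\<forall>x\<in>V. \<tau> x = X 0 \<longleftrightarrow> x = X 0"
    and preserves_A1: "\<forall>x\<in>V. \<tau> x \<in> range X \<longleftrightarrow> x \<in> range X"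
    using reflection_automorphism[where E = E and X = X and Y = Y, OF sym _ _ X_eq Y_eq XX XY YY]
    by blast
  have "X 1 \<noteq> X 0" using X_eq \<open>3 \<le> p\<close> by simp
  then have "{X 0} \<subset> range X" by auto
  have "Y 0 \<in> A2" using Y by blast
  then have "range X \<subset> V" using X(2) part(1,2) by blast
  have "\<forall>x\<in>V. \<tau> x = x"
    by (rule automorphism_preserving_nested_sets_trivial
        [OF every_coloring_distinguishing_dist_threshold[OF \<open>finite V\<close>, of E, unfolded theta] aut _
          \<open>{X 0} \<subset> range X\<close> \<open>range X \<subset> V\<close> _ preserves_A1])
      (use fixes_v in auto)
  then have "X (- 1) = X 1" using \<tau>_X[of 1] X part(1) by auto
  then show False using X_eq \<open>3 \<le> p\<close> by (simp add: zmod_minus1)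
qed

theorem mainTheorem4:
  fixes V :: "'a set" and E :: "'a \<Rightarrow> 'a \<Rightarrow> bool"
    and A1 A2 :: "'a set" and p :: nat
  assumes G: "simple_graph V E"
    and theta: "dist_threshold V E = 3"
    and size: "card V > 4"
    and p: "prime p" "p \<notin> {3, 5}" "card V = 2 * p"
    and part: "A1 \<union> A2 = V" "A1 \<inter> A2 = {}" "card A1 = p" "card A2 = p"
    and classes: "\<forall>x\<in>A1. \<forall>y\<in>A1. degree V E x = degree V E y"
                 "\<forall>x\<in>A2. \<forall>y\<in>A2. degree V E x = degree V E y"
                 "\<forall>x\<in>A1. \<forall>y\<in>A2. degree V E x \<noteq> degree V E y"
  shows "(\<forall>v\<in>A1. 3 \<le> card {u\<in>A2. E v u} \<and> card {u\<in>A2. E v u} \<le> p - 3) \<and>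
         (\<forall>v\<in>A2. 3 \<le> card {u\<in>A1. E v u} \<and> card {u\<in>A1. E v u} \<le> p - 3)"
proof -
  have "3 \<le> p" using size p(3) by linarith
  have part': "A2 \<union> A1 = V" "A2 \<inter> A1 = {}" using part(1,2) by blast+
  have classes': "\<forall>x\<in>A2. \<forall>y\<in>A1. degree V E x \<noteq> degree V E y" using classes(3) by metis
  show ?thesis
    using cross_neighbourhood_bounds[OF G theta \<open>3 \<le> p\<close> part classes(3)]
      cross_neighbourhood_bounds[OF G theta \<open>3 \<le> p\<close> part' part(4,3) classes']
    by blast
qed

end
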